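(* For $m,n\ge2$, \[ \sum_{k=2}^m\sum_{l=2}^n k!\left\{{m\atop k}\right\}\, l!\left\{{n\atop l}\right\}\,G_{k,l}=1-\frac{m!\,n!}{(m+n-1)!}. \]
   Context: The generalized Gregory coefficients $G_{m,n}$ are defined by $\sum_{m,n\ge0}G_{m,n}x^my^n=\dfrac{y\log^2(1+x)-x\log^2(1+y)}{\log(1+x)-\log(1+y)}$ (formal power series; $\log^ku=(\log u)^k$). $\left\{{n\atop m}\right\}$ are the Stirling numbers of the second kind: $\left\{{n+1\atop m}\right\}=\left\{{n\atop m-1}\right\}+m\left\{{n\atop m}\right\}$, $\left\{{0\atop 0}\right\}=1$, $\left\{{n\atop 0}\right\}=\left\{{0\atop m}\right\}=0$ for $n,m\ne0$. *)

theory Defs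
  imports "HOL-Computational_Algebra.Formal_Power_Series" "HOL-Combinatorics.Stirling"
begin

text \<open>Bivariate formal power series in x and y are represented as elements of
  type real fps fps: the outer variable is x, the coefficients are power series in y.
  The coefficient of x^m y^n of F is fps_nth (fps_nth F m) n.\<close>

definition bvX :: "real fps fps" where "bvX = fps_X"
definition bvY :: "real fps fps" where "bvY = fps_const fps_X"

text \<open>log(1+x) and log(1+y); fps_ln 1 is the series of log(1+z).\<close>
definition logX :: "real fps fps" where "logX = Abs_fps (\<lambda>m. fps_const (fps_nth (fps_ln 1) m))"
definition logY :: "real fps fps" where "logY = fps_const (fps_ln 1)"

text \<open>The generating function of the generalized Gregory coefficients: the formal
  quotient, i.e. the unique series F with F * (log(1+x) - log(1+y)) equal to the numerator
  (unique since the bivariate power series ring is an integral domain).\<close>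
definition gregory_gf :: "real fps fps" where
  "gregory_gf = (THE F. F * (logX - logY) = bvY * logX ^ 2 - bvX * logY ^ 2)"

definition G :: "nat \<Rightarrow> nat \<Rightarrow> real" where
  "G m n = fps_nth (fps_nth gregory_gf m) n"

end

theory Submission
  imports Defs
begin

unbundle fps_syntax

text \<open>Substituting x = e^s - 1 and y = e^t - 1 turns log(1+x) - log(1+y) into s - t, so the
  substituted generating function H(s,t) is determined by
  H(s,t) (s - t) = (e^t - 1) s^2 - (e^s - 1) t^2, which is solved explicitly by
  H(s,t) = s t - (sum over m, n \<ge> 2 of s^m t^n / (m+n-1)!).
  Since (e^s - 1)^k = k! (sum over m of S(m,k) s^m / m!), the coefficient m! n! [s^m t^n] H is
  the Stirling-weighted sum of all G(k,l) with k \<le> m, l \<le> n. The terms with k \<le> 1 or l \<le> 1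
  are removed by inclusion-exclusion, using the cases m = 1 and n = 1 of the same identity.\<close>

lemma fps_exp_minus_one_power_nth:
  "((fps_exp 1 - 1) ^ k) $ m = fact k * of_nat (Stirling m k) / (fact m :: 'a::field_char_0)"
proof (induction m arbitrary: k)
  case 0
  then show ?case by (cases k) (simp_all add: fps_power_nth_Suc)
next
  case (Suc m)
  show ?case
  proof (cases k)
    case 0
    then show ?thesis by simp
  next
    case (Suc j)
    let ?E = "fps_exp 1 - 1 :: 'a fps"
    have "fps_deriv (?E ^ Suc j) = of_nat (Suc j) * (?E + 1) * ?E ^ j"
      by (simp only: fps_deriv_power' diff_Suc_1) simp
    then have deriv: "fps_deriv (?E ^ Suc j) = of_nat (Suc j) * (?E ^ Suc j + ?E ^ j)"
      by (simp add: algebra_simps)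
    have "of_nat (Suc m) * (?E ^ Suc j) $ Suc m = fps_deriv (?E ^ Suc j) $ m"
      by (simp only: fps_deriv_nth Suc_eq_plus1)
    also have "\<dots> = of_nat (Suc j) * ((?E ^ Suc j) $ m + (?E ^ j) $ m)"
      unfolding deriv by (simp add: fps_of_nat[symmetric] del: of_nat_Suc)
    also have "\<dots> = of_nat (Suc j) * (fact (Suc j) * of_nat (Stirling m (Suc j)) / fact m
                                      + fact j * of_nat (Stirling m j) / fact m)"
      by (simp only: Suc.IH)
    finally have "(?E ^ Suc j) $ Suc m = of_nat (Suc j) * (fact (Suc j) * of_nat (Stirling m (Suc j))
        / fact m + fact j * of_nat (Stirling m j) / fact m) / of_nat (Suc m)"
      by (simp add: field_simps del: of_nat_Suc)
    also have "\<dots> = fact (Suc j) * of_nat (Stirling (Suc m) (Suc j)) / fact (Suc m)"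
      by (simp add: field_simps)
    finally show ?thesis
      using Suc by simp
  qed
qed

text \<open>Bivariate series live in \<open>'a fps fps\<close> with outer variable x, as in the definition
  of the generating function: \<open>fps_const\<close> embeds a series in y, \<open>fps_in_x\<close> a series in x,
  and \<open>fps_compose_xy F e\<close> is F(e(x), e(y)).\<close>

definition fps_in_x :: "'a::zero fps \<Rightarrow> 'a fps fps" where
  "fps_in_x f = Abs_fps (\<lambda>m. fps_const (f $ m))"

definition fps_compose_y :: "'a::semiring_1 fps fps \<Rightarrow> 'a fps \<Rightarrow> 'a fps fps" where
  "fps_compose_y F e = Abs_fps (\<lambda>m. F $ m oo e)"

definition fps_compose_xy :: "'a::semiring_1 fps fps \<Rightarrow> 'a fps \<Rightarrow> 'a fps fps" where
  "fps_compose_xy F e = fps_compose_y F e oo fps_in_x e"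

lemma fps_in_x_nth [simp]: "fps_in_x f $ m = fps_const (f $ m)"
  by (simp add: fps_in_x_def)

lemma fps_compose_y_nth [simp]: "fps_compose_y F e $ m = F $ m oo e"
  by (simp add: fps_compose_y_def)

lemma fps_const_sum: "fps_const (\<Sum>i\<in>A. f i) = (\<Sum>i\<in>A. fps_const (f i))"
  by (induction A rule: infinite_finite_induct) (simp_all flip: fps_const_add)

lemma fps_in_x_mult: "fps_in_x (f * g) = fps_in_x f * fps_in_x (g :: 'a::comm_semiring_1 fps)"
  by (rule fps_ext) (simp add: fps_mult_nth fps_const_sum)

lemma fps_in_x_one [simp]: "fps_in_x (1 :: 'a::comm_semiring_1 fps) = 1"
  by (rule fps_ext) (simp add: fps_one_nth)

lemma fps_in_x_power: "fps_in_x (f ^ k) = fps_in_x (f :: 'a::comm_semiring_1 fps) ^ k"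
  by (induction k) (simp_all add: fps_in_x_mult)

lemma fps_in_x_X [simp]: "fps_in_x fps_X = (fps_X :: 'a::comm_semiring_1 fps fps)"
  by (rule fps_ext) (simp add: fps_X_def)

lemma fps_in_x_compose: "fps_in_x (f oo g) = fps_in_x f oo fps_in_x (g :: 'a::comm_semiring_1 fps)"
  by (rule fps_ext) (simp add: fps_compose_nth fps_const_sum flip: fps_in_x_power)

lemma fps_compose_y_mult:
  "e $ 0 = 0 \<Longrightarrow> fps_compose_y (A * B) e = fps_compose_y A e * fps_compose_y B (e :: 'a::idom fps)"
  by (rule fps_ext) (simp add: fps_mult_nth fps_compose_sum_distrib fps_compose_mult_distrib)

lemma fps_compose_y_diff:
  "fps_compose_y (A - B) e = fps_compose_y A e - fps_compose_y B (e :: 'a::ring_1 fps)"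
  by (rule fps_ext) (simp add: fps_compose_sub_distrib)

lemma fps_compose_y_in_x [simp]:
  "fps_compose_y (fps_in_x f) e = fps_in_x (f :: 'a::comm_ring_1 fps)"
  by (rule fps_ext) simp

lemma fps_compose_y_const [simp]:
  "fps_compose_y (fps_const c) e = fps_const (c oo (e :: 'a::comm_ring_1 fps))"
  by (rule fps_ext) simp

lemma fps_compose_xy_mult:
  "e $ 0 = 0 \<Longrightarrow> fps_compose_xy (A * B) e = fps_compose_xy A e * fps_compose_xy B (e :: 'a::idom fps)"
  by (simp add: fps_compose_xy_def fps_compose_y_mult fps_compose_mult_distrib)

lemma fps_compose_xy_diff:
  "fps_compose_xy (A - B) e = fps_compose_xy A e - fps_compose_xy B (e :: 'a::idom fps)"
  by (simp add: fps_compose_xy_def fps_compose_y_diff fps_compose_sub_distrib)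

lemma fps_compose_xy_in_x [simp]: "fps_compose_xy (fps_in_x f) e = fps_in_x (f oo (e :: 'a::idom fps))"
  by (simp add: fps_compose_xy_def fps_in_x_compose)

lemma fps_compose_xy_const [simp]:
  "fps_compose_xy (fps_const c) e = fps_const (c oo (e :: 'a::comm_ring_1 fps))"
  by (simp add: fps_compose_xy_def)

lemma fps_compose_xy_power:
  "e $ 0 = 0 \<Longrightarrow> fps_compose_xy (A ^ k) e = fps_compose_xy A (e :: 'a::idom fps) ^ k"
  by (induction k) (simp_all add: fps_compose_xy_mult flip: fps_const_1_eq_1)

lemma fps_compose_xy_nth:
  "fps_compose_xy F e $ m $ n = (\<Sum>k=0..m. \<Sum>l=0..n. F $ k $ l * (e ^ l) $ n * (e ^ k) $ m)"
  for e :: "'a::comm_semiring_1 fps"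
  unfolding fps_compose_xy_def
  by (simp add: fps_compose_nth fps_sum_nth sum_distrib_right flip: fps_in_x_power)

definition gregory_num :: "'a::comm_ring_1 fps \<Rightarrow> 'a fps \<Rightarrow> 'a fps fps" where
  "gregory_num f g = fps_const f * fps_in_x g ^ 2 - fps_in_x f * fps_const g ^ 2"

definition fps_diff_xy :: "'a::comm_ring_1 fps \<Rightarrow> 'a fps fps" where
  "fps_diff_xy g = fps_in_x g - fps_const g"

lemma fps_diff_xy_nonzero: "g $ 1 \<noteq> 0 \<Longrightarrow> fps_diff_xy g \<noteq> 0"
  by (auto simp: fps_diff_xy_def fps_eq_iff dest!: spec[of _ 1] spec[of _ 0])

lemma fps_compose_xy_equation:
  fixes F :: "'a::idom fps fps"
  assumes "F * fps_diff_xy g = gregory_num f g" and "e $ 0 = 0"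
  shows "fps_compose_xy F e * fps_diff_xy (g oo e) = gregory_num (f oo e) (g oo e)"
proof -
  have "fps_compose_xy (F * fps_diff_xy g) e = fps_compose_xy (gregory_num f g) e"
    using assms(1) by simp
  then show ?thesis
    using assms(2)
    by (simp add: fps_compose_xy_mult fps_compose_xy_diff fps_compose_xy_power
                  gregory_num_def fps_diff_xy_def flip: fps_compose_power)
qed

abbreviation ln1p :: "real fps" where "ln1p \<equiv> fps_ln 1"

abbreviation expm1 :: "real fps" where "expm1 \<equiv> fps_exp 1 - 1"

lemma ln1p_compose_expm1: "ln1p oo expm1 = fps_X"
  using fps_inv_fps_exp_compose(1)[of "1::real"] by (simp add: fps_ln_fps_exp_inv)

lemma expm1_compose_ln1p: "expm1 oo ln1p = fps_X"
  using fps_inv_fps_exp_compose(2)[of "1::real"] by (simp add: fps_ln_fps_exp_inv)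

lemma gregory_gf_num_eq: "bvY * logX ^ 2 - bvX * logY ^ 2 = gregory_num fps_X ln1p"
  by (simp add: gregory_num_def bvX_def bvY_def logX_def logY_def flip: fps_in_x_def)

lemma gregory_gf_denom_eq: "logX - logY = fps_diff_xy ln1p"
  by (simp add: fps_diff_xy_def logX_def logY_def flip: fps_in_x_def)

definition gregory_exp_coeff :: "nat \<Rightarrow> nat \<Rightarrow> real" where
  "gregory_exp_coeff m n =
     (if m = 1 \<and> n = 1 then 1 else if m \<ge> 2 \<and> n \<ge> 2 then - 1 / fact (m + n - 1) else 0)"

definition gregory_exp_gf :: "real fps fps" where
  "gregory_exp_gf = Abs_fps (\<lambda>m. Abs_fps (\<lambda>n. gregory_exp_coeff m n))"

lemma gregory_exp_gf_equation: "gregory_exp_gf * fps_diff_xy fps_X = gregory_num expm1 fps_X"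
proof (intro fps_ext)
  fix m n
  have lhs: "(gregory_exp_gf * fps_diff_xy fps_X) $ m $ n =
      (if m = 0 then 0 else gregory_exp_coeff (m - 1) n) - (if n = 0 then 0 else gregory_exp_coeff m (n - 1))"
    by (simp add: fps_diff_xy_def algebra_simps gregory_exp_gf_def)
  have rhs: "gregory_num expm1 fps_X $ m $ n =
      (if m = 2 \<and> n \<ge> 1 then 1 / fact n else 0) - (if n = 2 \<and> m \<ge> 1 then 1 / fact m else 0)"
    by (simp add: gregory_num_def power2_eq_square fps_X_nth flip: mult.assoc)
  show "(gregory_exp_gf * fps_diff_xy fps_X) $ m $ n = gregory_num expm1 fps_X $ m $ n"
    unfolding lhs rhs gregory_exp_coeff_def
    by (cases "m = 0"; cases "n = 0"; cases "m = 1"; cases "n = 1"; cases "m = 2"; cases "n = 2")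
       (auto simp: fact_numeral)
qed

lemma gregory_gf_equation: "gregory_gf * fps_diff_xy ln1p = gregory_num fps_X ln1p"
proof -
  define F where "F = fps_compose_xy gregory_exp_gf ln1p"
  have F: "F * fps_diff_xy ln1p = gregory_num fps_X ln1p"
    using fps_compose_xy_equation[OF gregory_exp_gf_equation, of ln1p]
    by (simp add: F_def expm1_compose_ln1p)
  have "fps_diff_xy ln1p \<noteq> 0"
    by (rule fps_diff_xy_nonzero) (simp add: fps_ln_nth)
  have "gregory_gf = F"
    unfolding gregory_gf_def gregory_gf_num_eq gregory_gf_denom_eq
  proof (rule the_equality)
    fix F' assume "F' * fps_diff_xy ln1p = gregory_num fps_X ln1p"
    with F \<open>fps_diff_xy ln1p \<noteq> 0\<close> show "F' = F"
      by (metis mult_right_cancel)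
  qed (fact F)
  with F show ?thesis
    by simp
qed

lemma fps_compose_xy_gregory_gf: "fps_compose_xy gregory_gf expm1 = gregory_exp_gf"
proof -
  have "fps_compose_xy gregory_gf expm1 * fps_diff_xy fps_X = gregory_exp_gf * fps_diff_xy fps_X"
    using fps_compose_xy_equation[OF gregory_gf_equation, of expm1]
    by (simp add: ln1p_compose_expm1 gregory_exp_gf_equation)
  moreover have "fps_diff_xy (fps_X :: real fps) \<noteq> 0"
    by (rule fps_diff_xy_nonzero) simp
  ultimately show ?thesis
    by simp
qed

definition stirling_G_sum :: "nat \<Rightarrow> nat \<Rightarrow> real" where
  "stirling_G_sum m n =
     (\<Sum>k=0..m. \<Sum>l=0..n. fact k * real (Stirling m k) * (fact l * real (Stirling n l)) * G k l)"

lemma stirling_G_sum_eq: "stirling_G_sum m n = fact m * fact n * gregory_exp_coeff m n"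
proof -
  have "gregory_exp_coeff m n = fps_compose_xy gregory_gf expm1 $ m $ n"
    by (simp add: fps_compose_xy_gregory_gf gregory_exp_gf_def)
  also have "\<dots> = (\<Sum>k=0..m. \<Sum>l=0..n. G k l * (fact l * real (Stirling n l) / fact n)
                                          * (fact k * real (Stirling m k) / fact m))"
    by (simp add: fps_compose_xy_nth fps_exp_minus_one_power_nth G_def)
  also have "\<dots> = stirling_G_sum m n / (fact m * fact n)"
    by (simp add: stirling_G_sum_def sum_divide_distrib mult_ac)
  finally show ?thesis
    by simp
qed

lemma Stirling_weighted_sum_from_2:
  fixes a :: "nat \<Rightarrow> real"
  assumes "m \<ge> 1"
  shows "(\<Sum>k=0..m. fact k * real (Stirling m k) * a k) = a 1 + (\<Sum>k=2..m. fact k * real (Stirling m k) * a k)"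
proof -
  obtain m' where "m = Suc m'"
    using assms by (cases m) auto
  then show ?thesis
    by (simp add: sum.atLeast_Suc_atMost numeral_2_eq_2 del: Stirling.simps(4))
qed

lemma stirling_G_sum_inclusion_exclusion:
  assumes "m \<ge> 1" and "n \<ge> 1"
  shows "(\<Sum>k=2..m. \<Sum>l=2..n. fact k * real (Stirling m k) * (fact l * real (Stirling n l)) * G k l)
         = stirling_G_sum m n - stirling_G_sum 1 n - stirling_G_sum m 1 + stirling_G_sum 1 1"
proof -
  let ?w = "\<lambda>m k. fact k * real (Stirling m k)"
  define R where "R k = (\<Sum>l=2..n. ?w n l * G k l)" for k
  have nested: "stirling_G_sum m' n' = (\<Sum>k=0..m'. ?w m' k * (\<Sum>l=0..n'. ?w n' l * G k l))" for m' n'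
    by (simp add: stirling_G_sum_def sum_distrib_left mult_ac)
  have row: "(\<Sum>l=0..n. ?w n l * G k l) = G k 1 + R k" for k
    using Stirling_weighted_sum_from_2[OF assms(2)] by (simp add: R_def)
  have "stirling_G_sum m n = G 1 1 + R 1 + (\<Sum>k=2..m. ?w m k * (G k 1 + R k))"
    by (simp add: nested row Stirling_weighted_sum_from_2[OF assms(1)])
  moreover have "stirling_G_sum 1 n = G 1 1 + R 1"
    by (simp add: nested row)
  moreover have "stirling_G_sum m 1 = G 1 1 + (\<Sum>k=2..m. ?w m k * G k 1)"
    by (simp add: nested Stirling_weighted_sum_from_2[OF assms(1)])
  moreover have "stirling_G_sum 1 1 = G 1 1"
    by (simp add: nested)
  ultimately show ?thesis
    by (simp add: R_def algebra_simps sum.distrib sum_distrib_left)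
qed

theorem theorem5p5:
  fixes m n :: nat
  assumes "m \<ge> 2" and "n \<ge> 2"
  shows "(\<Sum>k=2..m. \<Sum>l=2..n. fact k * real (Stirling m k) * (fact l * real (Stirling n l)) * G k l)
         = 1 - fact m * fact n / fact (m + n - 1)"
proof -
  have "(\<Sum>k=2..m. \<Sum>l=2..n. fact k * real (Stirling m k) * (fact l * real (Stirling n l)) * G k l)
        = stirling_G_sum m n - stirling_G_sum 1 n - stirling_G_sum m 1 + stirling_G_sum 1 1"
    using assms by (intro stirling_G_sum_inclusion_exclusion) auto
  also have "\<dots> = 1 - fact m * fact n / fact (m + n - 1)"
    using assms by (simp add: stirling_G_sum_eq gregory_exp_coeff_def)
  finally show ?thesis .
qed

end
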